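(* Let $n,m\ge 1$ and let $(\mathbf R,s),(\mathbf R',s'):n\to m$ be 1-morphisms of $\mathbf{2Mat}_{\mathbb C}$. Then: (i) $(\mathbf R,s)$ is invertible if and only if $n=m$ and $\mathbf R$ is a permutation matrix; (ii) $(\mathbf R,s)$ and $(\mathbf R',s')$ are 2-isomorphic if and only if $\mathbf R=\mathbf R'$, and a 2-morphism $\mathsf T:(\mathbf R,s)\Rightarrow(\mathbf R,s')$ is invertible if and only if all its nonempty entries are nonsingular matrices; (iii) $(\mathbf R,s)$ is an equivalence if and only if it is invertible.
   Context: $\mathbf{2Mat}_{\mathbb C}$ is the following 2-category. Objects: integers $n\ge0$. For $n,m\ge1$ a 1-morphism $n\to m$ is a pair $(\mathbf R,s)$ with $\mathbf R=(R_{ij})$ an $m\times n$ matrix of natural numbers (rank matrix) and $s=(s_1,\dots,s_m)$ a gauge: for each $\mathbf a\in\mathbb N^n$ and $i$, $s_i(\mathbf a)\in GL((\mathbf R\mathbf a)_i,\mathbb C)$ (with $s_i(\mathbf a)=1$ if $(\mathbf R\mathbf a)_i=0$), normalized by $s_i(\mathbf e_j)=\mathbf I_{R_{ij}}$ ($\mathbf e_j$ the standard basis vectors). If $n=0$ or $m=0$ there is a unique 1-morphism $n\to m$ with only its identity 2-morphism. A 2-morphism $\mathsf T:(\mathbf R,s)\Rightarrow(\mathbf R',s')$ is an $m\times n$ array whose $(i,j)$ entry $\mathsf T_{ij}$ is a complex $R'_{ij}\times R_{ij}$ matrix if $R_{ij},R'_{ij}\neq0$ and is empty otherwise. Vertical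 composition is entrywise matrix product, $(\mathsf T'\cdot\mathsf T)_{ij}=\mathsf T'_{ij}\mathsf T_{ij}$ (with empty or zero matrices as appropriate). The composite of $(\mathbf R,s):n\to m$ and $(\tilde{\mathbf R},\tilde s):m\to p$ is $(\tilde{\mathbf R}\mathbf R,\tilde s\ast s)$ with $(\tilde s\ast s)_k(\mathbf a)=\tilde s_k(\mathbf R\mathbf a)\big(\bigoplus_{i}\mathbf I_{\tilde R_{ki}}\otimes s_i(\mathbf a)\big)\mathbf P(\tilde{\mathbf R}_k,\mathbf R,\mathbf a)\big(\bigoplus_j \tilde s_k(\mathbf R\mathbf e_j)^{-1}\otimes\mathbf I_{a_j}\big)$, where $\otimes$ is the Kronecker product, $\tilde{\mathbf R}_k$ is the $k$-th row of $\tilde{\mathbf R}$ and $\mathbf P(\tilde{\mathbf R}_k,\mathbf R,\mathbf a)$ is a fixed permutation matrix of order $\sum_{i,j}\tilde R_{ki}R_{ij}a_j$ (part of the construction of $\mathbf{2Mat}_{\mathbb C}$) which is the identity whenever $\tilde{\mathbf R}_k$ is a standard basis vector, $\mathbf a$ is a standard basis vector, $\mathbf R$ is an identity matrix, or $\mathbf R$ has a single column. Horizontal composition of $\mathsf T:(\mathbf R,s)\Rightarrow(\mathbf R',s'):n\to m$ and $\tilde{\mathsf T}:(\tilde{\mathbf R},\tilde s)\Rightarrow(\tilde{\mathbf R}',\tilde s'):m\to p$ is $(\tilde{\mathsf T}\circ\mathsf T)_{kj}=\tilde s'_k(\mathbf R'\mathbf e_j)\big(\bigoplus_i\tilde{\mathsf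 T}_{ki}\otimes\mathsf T_{ij}\big)\tilde s_k(\mathbf R\mathbf e_j)^{-1}$. The identity of $n$ is $(\mathbf I_n,\mathbf I)$ with $\mathbf I$ the trivial gauge (all $s_i(\mathbf a)$ identity matrices), and identity 2-morphisms have identity matrices as nonempty entries. A 1-morphism is an equivalence if it is invertible up to invertible 2-morphisms. *)

theory Defs
  imports "HOL-Combinatorics.Permutations" "Jordan_Normal_Form.Matrix"
begin

definition minv :: "complex mat \<Rightarrow> complex mat" where
  "minv A = (SOME B. B \<in> carrier_mat (dim_row A) (dim_row A) \<and> inverts_mat A B \<and> inverts_mat B A)"

definition kron :: "'a::semiring_0 mat \<Rightarrow> 'a mat \<Rightarrow> 'a mat" where
  "kron A B = mat (dim_row A * dim_row B) (dim_col A * dim_col B)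
     (\<lambda>(i,j). A $$ (i div dim_row B, j div dim_col B) * B $$ (i mod dim_row B, j mod dim_col B))"

definition dsum :: "'a::zero mat \<Rightarrow> 'a mat \<Rightarrow> 'a mat" where
  "dsum A B = four_block_mat A (0\<^sub>m (dim_row A) (dim_col B)) (0\<^sub>m (dim_row B) (dim_col A)) B"

definition dsum_list :: "'a::zero mat list \<Rightarrow> 'a mat" where
  "dsum_list Ms = foldr dsum Ms (0\<^sub>m 0 0)"

definition perm_mat :: "nat \<Rightarrow> 'a::{zero,one} mat \<Rightarrow> bool" where
  "perm_mat n A \<longleftrightarrow> (\<exists>p. p permutes {..<n} \<and>
      A = mat n n (\<lambda>(i,j). if j = p i then 1 else 0))"

text \<open>A 1-morphism n \<rightarrow> m is a pair (R, s): R an m \<times> n natural-number matrix and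
  s a gauge, s i a for i < m and a \<in> N^n (a nat vector of dimension n).\<close>
type_synonym mor1 = "nat mat \<times> (nat \<Rightarrow> nat vec \<Rightarrow> complex mat)"

definition is_1mor :: "nat \<Rightarrow> nat \<Rightarrow> mor1 \<Rightarrow> bool" where
  "is_1mor n m f \<longleftrightarrow> (case f of (R, s) \<Rightarrow>
     R \<in> carrier_mat m n \<and>
     (\<forall>i<m. \<forall>a\<in>carrier_vec n.
        s i a \<in> carrier_mat ((R *\<^sub>v a) $ i) ((R *\<^sub>v a) $ i) \<and> invertible_mat (s i a)) \<and>
     (\<forall>i<m. \<forall>j<n. s i (unit_vec n j) = 1\<^sub>m (R $$ (i,j))))"

text \<open>Equality of 1-morphisms n \<rightarrow> m (the gauge only matters on its domain).\<close>
definition mor_eq :: "nat \<Rightarrow> nat \<Rightarrow> mor1 \<Rightarrow> mor1 \<Rightarrow> bool" where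
  "mor_eq n m f g \<longleftrightarrow> fst f = fst g \<and>
     (\<forall>i<m. \<forall>a\<in>carrier_vec n. snd f i a = snd g i a)"

text \<open>Admissible families of permutation matrices P(r, R, a), where r is a row
  (of the outer rank matrix), R the inner rank matrix, a \<in> N^n.\<close>
definition admissible_P :: "(nat vec \<Rightarrow> nat mat \<Rightarrow> nat vec \<Rightarrow> complex mat) \<Rightarrow> bool" where
  "admissible_P P \<longleftrightarrow>
    (\<forall>m n r R a. r \<in> carrier_vec m \<longrightarrow> R \<in> carrier_mat m n \<longrightarrow> a \<in> carrier_vec n \<longrightarrow>
      (let N = (\<Sum>i<m. \<Sum>j<n. r $ i * R $$ (i,j) * a $ j) in
        perm_mat N (P r R a) \<and>
        ((\<exists>i<m. r = unit_vec m i) \<or> (\<exists>j<n. a = unit_vec n j) \<or> R = 1\<^sub>m n \<or> n = 1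
           \<longrightarrow> P r R a = 1\<^sub>m N)))"

definition comp1 :: "(nat vec \<Rightarrow> nat mat \<Rightarrow> nat vec \<Rightarrow> complex mat) \<Rightarrow> mor1 \<Rightarrow> mor1 \<Rightarrow> mor1" where
  "comp1 P g f = (case g of (Rt, st) \<Rightarrow> case f of (R, s) \<Rightarrow>
     (Rt * R,
      \<lambda>k a. st k (R *\<^sub>v a)
        * dsum_list (map (\<lambda>i. kron (1\<^sub>m (Rt $$ (k,i))) (s i a)) [0..<dim_row R])
        * P (row Rt k) R a
        * dsum_list (map (\<lambda>j. kron (minv (st k (R *\<^sub>v unit_vec (dim_col R) j))) (1\<^sub>m (a $ j)))
                       [0..<dim_col R])))"

definition id1 :: "nat \<Rightarrow> mor1" where
  "id1 n = (1\<^sub>m n, \<lambda>i a. 1\<^sub>m (a $ i))"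

definition invertible_1mor :: "(nat vec \<Rightarrow> nat mat \<Rightarrow> nat vec \<Rightarrow> complex mat) \<Rightarrow> nat \<Rightarrow> nat \<Rightarrow> mor1 \<Rightarrow> bool" where
  "invertible_1mor P n m f \<longleftrightarrow> (\<exists>g. is_1mor m n g \<and>
     mor_eq n n (comp1 P g f) (id1 n) \<and> mor_eq m m (comp1 P f g) (id1 m))"

text \<open>2-morphisms f \<Rightarrow> f' between 1-morphisms n \<rightarrow> m: arrays of
  R'_ij \<times> R_ij complex matrices (empty if a dimension is 0).\<close>
type_synonym mor2 = "nat \<Rightarrow> nat \<Rightarrow> complex mat"

definition is_2mor :: "nat \<Rightarrow> nat \<Rightarrow> mor1 \<Rightarrow> mor1 \<Rightarrow> mor2 \<Rightarrow> bool" where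
  "is_2mor n m f f' T \<longleftrightarrow>
     (\<forall>i<m. \<forall>j<n. T i j \<in> carrier_mat (fst f' $$ (i,j)) (fst f $$ (i,j)))"

definition vcomp :: "mor2 \<Rightarrow> mor2 \<Rightarrow> mor2" where
  "vcomp T' T = (\<lambda>i j. T' i j * T i j)"

definition id2 :: "mor1 \<Rightarrow> mor2" where
  "id2 f = (\<lambda>i j. 1\<^sub>m (fst f $$ (i,j)))"

definition invertible_2mor :: "nat \<Rightarrow> nat \<Rightarrow> mor1 \<Rightarrow> mor1 \<Rightarrow> mor2 \<Rightarrow> bool" where
  "invertible_2mor n m f f' T \<longleftrightarrow> is_2mor n m f f' T \<and>
     (\<exists>T'. is_2mor n m f' f T' \<and>
        (\<forall>i<m. \<forall>j<n. vcomp T' T i j = id2 f i j \<and> vcomp T T' i j = id2 f' i j))"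

definition iso2 :: "nat \<Rightarrow> nat \<Rightarrow> mor1 \<Rightarrow> mor1 \<Rightarrow> bool" where
  "iso2 n m f f' \<longleftrightarrow> (\<exists>T. invertible_2mor n m f f' T)"

definition equivalence_1mor :: "(nat vec \<Rightarrow> nat mat \<Rightarrow> nat vec \<Rightarrow> complex mat) \<Rightarrow> nat \<Rightarrow> nat \<Rightarrow> mor1 \<Rightarrow> bool" where
  "equivalence_1mor P n m f \<longleftrightarrow> (\<exists>g. is_1mor m n g \<and>
     iso2 n n (comp1 P g f) (id1 n) \<and> iso2 m m (comp1 P f g) (id1 m))"

end

theory Submission
  imports Defs
begin

text \<open>The entries of a 2-morphism between 1-morphisms with rank matrices \<open>R\<close> and \<open>R'\<close> are
  \<open>R'\<^sub>i\<^sub>j \<times> R\<^sub>i\<^sub>j\<close> matrices, and mutually inverse complex matrices are square (their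
  products have the same trace). Hence 2-isomorphic 1-morphisms have the same rank matrix and a
  2-morphism is invertible iff its entries are. The rank matrix of an equivalence thus has a
  two-sided inverse over \<open>\<nat>\<close>; as nothing cancels in sums of natural numbers, every column is a
  standard basis vector and the matrix is a permutation matrix \<open>P\<^sub>p\<close>. Conversely, for
  \<open>R = P\<^sub>p\<close> the normalisations of the gauges and of \<open>P\<close> reduce the composite gauge with
  another permutation 1-morphism to a product of two gauge values, and
  \<open>t\<^sub>k(b) = s\<^bsub>p\<^sup>-\<^sup>1 k\<^esub>(P\<^bsub>p\<^sup>-\<^sup>1\<^esub> b)\<^sup>-\<^sup>1\<close> is a strict inverse gauge.\<close>

definition mat_trace :: "'a::comm_monoid_add mat \<Rightarrow> 'a" where
  "mat_trace A = (\<Sum>i<dim_row A. A $$ (i,i))"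

lemma mat_trace_mult_comm:
  fixes A B :: "'a::comm_semiring_0 mat"
  assumes "A \<in> carrier_mat a b" "B \<in> carrier_mat b a"
  shows "mat_trace (A * B) = mat_trace (B * A)"
proof -
  have "mat_trace (A * B) = (\<Sum>i<a. \<Sum>k<b. A $$ (i,k) * B $$ (k,i))"
    using assms by (simp add: mat_trace_def scalar_prod_def atLeast0LessThan)
  also have "\<dots> = (\<Sum>k<b. \<Sum>i<a. B $$ (k,i) * A $$ (i,k))"
    by (subst sum.swap) (simp add: mult.commute)
  also have "\<dots> = mat_trace (B * A)"
    using assms by (simp add: mat_trace_def scalar_prod_def atLeast0LessThan)
  finally show ?thesis .
qed

lemma mat_trace_one [simp]: "mat_trace (1\<^sub>m k :: 'a::semiring_1 mat) = of_nat k"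
  by (simp add: mat_trace_def)

lemma mutually_inverse_mats_square:
  fixes A B :: "'a::{comm_semiring_1,semiring_char_0} mat"
  assumes "A \<in> carrier_mat a b" "B \<in> carrier_mat b a" "A * B = 1\<^sub>m a" "B * A = 1\<^sub>m b"
  shows "a = b"
proof -
  have "(of_nat a :: 'a) = of_nat b"
    using mat_trace_mult_comm[OF assms(1,2)] assms(3,4) by simp
  then show ?thesis by simp
qed

lemma invertible_matI:
  fixes A B :: "'a::semiring_1 mat"
  assumes "A \<in> carrier_mat k k" "B \<in> carrier_mat k k" "A * B = 1\<^sub>m k" "B * A = 1\<^sub>m k"
  shows "invertible_mat A"
  using assms unfolding invertible_mat_def inverts_mat_def by auto

lemma invertible_matE:
  fixes A :: "'a::semiring_1 mat"
  assumes "A \<in> carrier_mat k k" "invertible_mat A"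
  obtains B where "B \<in> carrier_mat k k" "A * B = 1\<^sub>m k" "B * A = 1\<^sub>m k"
proof -
  obtain B where B: "A * B = 1\<^sub>m (dim_row A)" "B * A = 1\<^sub>m (dim_row B)"
    using assms(2) unfolding invertible_mat_def inverts_mat_def by blast
  have "dim_row B = k" "dim_col B = k"
    using B assms(1) by (metis carrier_matD index_mult_mat(2,3) index_one_mat(2,3))+
  then show ?thesis
    using B assms(1) that by auto
qed

lemma invertible_mat_carrier_0:
  fixes A :: "'a::semiring_1 mat"
  shows "A \<in> carrier_mat 0 0 \<Longrightarrow> invertible_mat A"
  by (rule invertible_matI[of A 0 A]) auto

lemma minv_inverse:
  assumes "A \<in> carrier_mat k k" "invertible_mat A"
  shows "minv A \<in> carrier_mat k k" "A * minv A = 1\<^sub>m k" "minv A * A = 1\<^sub>m k"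
proof -
  obtain B where "B \<in> carrier_mat k k" "A * B = 1\<^sub>m k" "B * A = 1\<^sub>m k"
    using assms by (rule invertible_matE)
  then have "\<exists>B. B \<in> carrier_mat (dim_row A) (dim_row A) \<and> inverts_mat A B \<and> inverts_mat B A"
    using assms(1) by (auto simp: inverts_mat_def)
  then have "minv A \<in> carrier_mat (dim_row A) (dim_row A) \<and> inverts_mat A (minv A)
      \<and> inverts_mat (minv A) A"
    unfolding minv_def by (rule someI_ex)
  then show "minv A \<in> carrier_mat k k" "A * minv A = 1\<^sub>m k" "minv A * A = 1\<^sub>m k"
    using assms(1) by (auto simp: inverts_mat_def)
qed

lemma invertible_minv:
  assumes "A \<in> carrier_mat k k" "invertible_mat A"
  shows "invertible_mat (minv A)"
  using minv_inverse[OF assms] assms(1) by (intro invertible_matI[of _ k A]) auto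

lemma minv_one [simp]: "minv (1\<^sub>m k) = 1\<^sub>m k"
proof -
  have "invertible_mat (1\<^sub>m k :: complex mat)"
    by (rule invertible_matI[of _ k "1\<^sub>m k"]) auto
  then have "1\<^sub>m k * minv (1\<^sub>m k) = 1\<^sub>m k" "minv (1\<^sub>m k) \<in> carrier_mat k k"
    using minv_inverse[of "1\<^sub>m k" k] by auto
  then show ?thesis by simp
qed

lemma kron_one_0_left: "kron (1\<^sub>m 0) X \<in> carrier_mat 0 0"
  by (simp add: kron_def)

lemma kron_one_1_left [simp]: "kron (1\<^sub>m (Suc 0)) (X :: 'a::semiring_1 mat) = X"
  by (rule eq_matI) (auto simp: kron_def)

lemma dsum_carrier_0_left: "A \<in> carrier_mat 0 0 \<Longrightarrow> dsum A B = B"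
  by (rule eq_matI) (auto simp: dsum_def)

lemma dsum_carrier_0_right: "B \<in> carrier_mat 0 0 \<Longrightarrow> dsum A B = A"
  by (rule eq_matI) (auto simp: dsum_def)

lemma dsum_list_carrier_0:
  "(\<And>x. x \<in> set xs \<Longrightarrow> f x \<in> carrier_mat 0 0) \<Longrightarrow> dsum_list (map f xs) \<in> carrier_mat 0 0"
  by (induction xs) (auto simp: dsum_list_def dsum_carrier_0_left)

lemma dsum_list_map_single:
  assumes "distinct xs" "z \<in> set xs" "\<And>x. x \<in> set xs \<Longrightarrow> x \<noteq> z \<Longrightarrow> f x \<in> carrier_mat 0 0"
  shows "dsum_list (map f xs) = f z"
  using assms
proof (induction xs)
  case (Cons x xs)
  show ?case
  proof (cases "x = z")
    case True
    then have "dsum_list (map f xs) \<in> carrier_mat 0 0"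
      using Cons.prems by (intro dsum_list_carrier_0) auto
    then show ?thesis
      using True by (simp add: dsum_list_def dsum_carrier_0_right)
  next
    case False
    then show ?thesis
      using Cons by (simp add: dsum_list_def dsum_carrier_0_left)
  qed
qed simp

lemma dsum_list_kron_unit:
  fixes X :: "nat \<Rightarrow> 'a::semiring_1 mat"
  assumes "j < n"
  shows "dsum_list (map (\<lambda>i. kron (1\<^sub>m (if i = j then 1 else 0)) (X i)) [0..<n]) = X j"
  by (subst dsum_list_map_single[where z = j]) (use assms in \<open>auto simp: kron_one_0_left\<close>)

section \<open>Permutation matrices\<close>

definition perm_matrix :: "(nat \<Rightarrow> nat) \<Rightarrow> nat \<Rightarrow> 'a::{zero,one} mat" where
  "perm_matrix p n = mat n n (\<lambda>(i,j). if j = p i then 1 else 0)"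

lemma perm_matrix_carrier [simp]:
  "perm_matrix p n \<in> carrier_mat n n" "dim_row (perm_matrix p n) = n" "dim_col (perm_matrix p n) = n"
  by (auto simp: perm_matrix_def)

lemma perm_matrix_index [simp]:
  "i < n \<Longrightarrow> j < n \<Longrightarrow> perm_matrix p n $$ (i,j) = (if j = p i then 1 else 0)"
  by (simp add: perm_matrix_def)

lemma perm_mat_iff_perm_matrix: "perm_mat n A \<longleftrightarrow> (\<exists>p. p permutes {..<n} \<and> A = perm_matrix p n)"
  by (simp add: perm_mat_def perm_matrix_def)

lemma sum_delta_mult:
  "j < (n::nat) \<Longrightarrow> (\<Sum>i<n. (if i = j then 1 else 0) * (f i :: 'a::semiring_1)) = f j"
  by (simp add: if_distrib[of "\<lambda>x. x * _"] cong: if_cong)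

lemma perm_matrix_mult_vec:
  fixes a :: "'a::semiring_1 vec"
  assumes p: "p permutes {..<n}" and a: "a \<in> carrier_vec n"
  shows "perm_matrix p n *\<^sub>v a = vec n (\<lambda>i. a $ p i)"
proof (rule eq_vecI)
  fix i assume "i < dim_vec (vec n (\<lambda>i. a $ p i))"
  then have i: "i < n" by simp
  then have "p i < n"
    using permutes_in_image[OF p] by simp
  then show "(perm_matrix p n *\<^sub>v a) $ i = vec n (\<lambda>i. a $ p i) $ i"
    using i a by (simp add: scalar_prod_def atLeast0LessThan sum_delta_mult)
qed simp

lemma perm_matrix_mult_unit_vec:
  assumes p: "p permutes {..<n}" and j: "j < n"
  shows "perm_matrix p n *\<^sub>v unit_vec n j = (unit_vec n (inv_into UNIV p j) :: 'a::semiring_1 vec)"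
proof (rule eq_vecI)
  fix i assume "i < dim_vec (unit_vec n (inv_into UNIV p j) :: 'a vec)"
  then have i: "i < n" by simp
  have "p i < n"
    using permutes_in_image[OF p] i by simp
  moreover have "(p i = j) = (i = inv_into UNIV p j)"
    using permutes_inv_eq[OF p] by metis
  ultimately show "(perm_matrix p n *\<^sub>v unit_vec n j) $ i = (unit_vec n (inv_into UNIV p j) :: 'a vec) $ i"
    unfolding perm_matrix_mult_vec[OF p unit_vec_carrier] using i by (simp add: unit_vec_def)
qed simp

lemma perm_matrix_mult:
  assumes p: "p permutes {..<n}"
  shows "perm_matrix p n * perm_matrix q n = (perm_matrix (q \<circ> p) n :: 'a::semiring_1 mat)"
proof (rule eq_matI)
  fix i j assume "i < dim_row (perm_matrix (q \<circ> p) n :: 'a mat)" "j < dim_col (perm_matrix (q \<circ> p) n :: 'a mat)"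
  then have ij: "i < n" "j < n" by auto
  then have "p i < n"
    using permutes_in_image[OF p] by simp
  then show "(perm_matrix p n * perm_matrix q n) $$ (i,j) = (perm_matrix (q \<circ> p) n :: 'a mat) $$ (i,j)"
    using ij by (simp add: scalar_prod_def atLeast0LessThan sum_delta_mult)
qed auto

lemma perm_matrix_inverse:
  assumes p: "p permutes {..<n}"
  shows "perm_matrix p n * perm_matrix (inv_into UNIV p) n = (1\<^sub>m n :: 'a::semiring_1 mat)"
    "perm_matrix (inv_into UNIV p) n * perm_matrix p n = (1\<^sub>m n :: 'a::semiring_1 mat)"
proof -
  have "perm_matrix id n = (1\<^sub>m n :: 'a mat)"
    by (rule eq_matI) auto
  then show "perm_matrix p n * perm_matrix (inv_into UNIV p) n = (1\<^sub>m n :: 'a mat)"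
    "perm_matrix (inv_into UNIV p) n * perm_matrix p n = (1\<^sub>m n :: 'a mat)"
    by (simp_all add: perm_matrix_mult p permutes_inv permutes_inv_o[OF p])
qed

lemma perm_matrix_row:
  "k < n \<Longrightarrow> p k < n \<Longrightarrow> row (perm_matrix p n) k = unit_vec n (p k)"
  by (rule eq_vecI) auto

section \<open>Natural-number matrices with natural-number inverses\<close>

text \<open>Over \<open>\<nat>\<close> nothing cancels in a matrix product, so every nonzero pair
  \<open>B $$ (k,i)\<close>, \<open>A $$ (i,l)\<close> already makes \<open>(B * A) $$ (k,l)\<close> nonzero.\<close>
lemma nat_mat_mult_one_support:
  fixes A B :: "nat mat"
  assumes A: "A \<in> carrier_mat p q" and B: "B \<in> carrier_mat q p" and BA: "B * A = 1\<^sub>m q"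
    and kli: "k < q" "l < q" "i < p" and nonzero: "B $$ (k,i) \<noteq> 0" "A $$ (i,l) \<noteq> 0"
  shows "k = l"
proof -
  have "B $$ (k,i) * A $$ (i,l) \<le> (\<Sum>j<p. B $$ (k,j) * A $$ (j,l))"
    by (rule member_le_sum) (use kli in auto)
  also have "\<dots> = (B * A) $$ (k,l)"
    using A B kli by (simp add: scalar_prod_def atLeast0LessThan)
  finally show ?thesis
    using BA kli nonzero by (auto split: if_splits)
qed

lemma nat_mat_mult_one_diag:
  fixes A B :: "nat mat"
  assumes A: "A \<in> carrier_mat p q" and B: "B \<in> carrier_mat q p" and BA: "B * A = 1\<^sub>m q"
    and l: "l < q"
  obtains i where "i < p" "B $$ (l,i) = 1" "A $$ (i,l) = 1"
proof -
  have "(\<Sum>j<p. B $$ (l,j) * A $$ (j,l)) = (B * A) $$ (l,l)"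
    using A B l by (simp add: scalar_prod_def atLeast0LessThan)
  then have sum: "(\<Sum>j<p. B $$ (l,j) * A $$ (j,l)) = 1"
    using BA l by simp
  then have "(\<Sum>j<p. B $$ (l,j) * A $$ (j,l)) \<noteq> 0"
    by simp
  then obtain i where i: "i \<in> {..<p}" "B $$ (l,i) * A $$ (i,l) \<noteq> 0"
    by (rule sum.not_neutral_contains_not_neutral)
  have "B $$ (l,i) * A $$ (i,l) \<le> 1"
    unfolding sum[symmetric] by (rule member_le_sum) (use i in auto)
  with i have "B $$ (l,i) * A $$ (i,l) = 1"
    by linarith
  then show ?thesis
    using that i(1) by simp
qed

lemma nat_mat_inverse_columns:
  fixes A B :: "nat mat"
  assumes A: "A \<in> carrier_mat p q" and B: "B \<in> carrier_mat q p"
    and BA: "B * A = 1\<^sub>m q" and AB: "A * B = 1\<^sub>m p"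
  shows "\<exists>\<sigma>. inj_on \<sigma> {..<q} \<and> \<sigma> ` {..<q} \<subseteq> {..<p}
    \<and> (\<forall>i<p. \<forall>l<q. A $$ (i,l) = (if i = \<sigma> l then 1 else 0))"
proof -
  define \<sigma> where "\<sigma> l = (SOME i. i < p \<and> B $$ (l,i) = 1 \<and> A $$ (i,l) = 1)" for l
  have \<sigma>: "\<sigma> l < p \<and> B $$ (l, \<sigma> l) = 1 \<and> A $$ (\<sigma> l, l) = 1" if l: "l < q" for l
  proof -
    obtain i where "i < p" "B $$ (l,i) = 1" "A $$ (i,l) = 1"
      using nat_mat_mult_one_diag[OF A B BA l] .
    then show ?thesis
      unfolding \<sigma>_def by (intro someI[of "\<lambda>i. i < p \<and> B $$ (l,i) = 1 \<and> A $$ (i,l) = 1"]) simp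
  qed
  have "inj_on \<sigma> {..<q}"
  proof (rule inj_onI)
    fix l l' assume l: "l \<in> {..<q}" "l' \<in> {..<q}" and eq: "\<sigma> l = \<sigma> l'"
    then have "\<sigma> l < p" "B $$ (l, \<sigma> l) \<noteq> 0" "A $$ (\<sigma> l, l') \<noteq> 0"
      using \<sigma>[of l] \<sigma>[of l'] by auto
    then show "l = l'"
      using nat_mat_mult_one_support[OF A B BA] l by blast
  qed
  moreover have "\<sigma> ` {..<q} \<subseteq> {..<p}"
    using \<sigma> by auto
  moreover have "A $$ (i,l) = (if i = \<sigma> l then 1 else 0)" if il: "i < p" "l < q" for i l
  proof (cases "A $$ (i,l) = 0")
    case False
    then have "i = \<sigma> l"
      using nat_mat_mult_one_support[OF B A AB, of i "\<sigma> l" l] \<sigma>[OF il(2)] il by simp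
    then show ?thesis
      using \<sigma>[OF il(2)] by simp
  qed (use \<sigma>[OF il(2)] in auto)
  ultimately show ?thesis
    by blast
qed

lemma nat_mat_inverse_perm_mat:
  fixes R S :: "nat mat"
  assumes R: "R \<in> carrier_mat m n" and S: "S \<in> carrier_mat n m"
    and SR: "S * R = 1\<^sub>m n" and RS: "R * S = 1\<^sub>m m"
  shows "n = m \<and> perm_mat n R"
proof -
  obtain \<sigma> where \<sigma>: "inj_on \<sigma> {..<n}" "\<sigma> ` {..<n} \<subseteq> {..<m}"
    and R_entries: "\<forall>i<m. \<forall>l<n. R $$ (i,l) = (if i = \<sigma> l then 1 else 0)"
    using nat_mat_inverse_columns[OF R S SR RS] by blast
  obtain \<tau> where \<tau>: "inj_on \<tau> {..<m}" "\<tau> ` {..<m} \<subseteq> {..<n}"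
    using nat_mat_inverse_columns[OF S R RS SR] by blast
  have nm: "n = m"
    using card_inj_on_le[OF \<sigma>] card_inj_on_le[OF \<tau>] by simp
  define \<sigma>' where "\<sigma>' j = (if j < n then \<sigma> j else j)" for j
  have "inj_on \<sigma>' {..<n}"
    using \<sigma>(1) by (rule inj_on_cong[THEN iffD1, rotated]) (simp add: \<sigma>'_def)
  moreover have "\<sigma>' ` {..<n} \<subseteq> {..<n}"
    using \<sigma>(2) nm by (auto simp: \<sigma>'_def)
  ultimately have "bij_betw \<sigma>' {..<n} {..<n}"
    by (simp add: bij_betw_def endo_inj_surj)
  then have \<sigma>'_perm: "\<sigma>' permutes {..<n}"
    by (rule bij_imp_permutes) (simp add: \<sigma>'_def)
  have "R = perm_matrix (inv_into UNIV \<sigma>') n"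
  proof (rule eq_matI)
    fix i j assume "i < dim_row (perm_matrix (inv_into UNIV \<sigma>') n :: nat mat)"
      "j < dim_col (perm_matrix (inv_into UNIV \<sigma>') n :: nat mat)"
    then have ij: "i < n" "j < n" by auto
    have "(j = inv_into UNIV \<sigma>' i) = (\<sigma>' j = i)"
      using permutes_inv_eq[OF \<sigma>'_perm, of i j] by auto
    also have "\<dots> = (i = \<sigma> j)"
      using ij unfolding \<sigma>'_def by auto
    finally show "R $$ (i,j) = perm_matrix (inv_into UNIV \<sigma>') n $$ (i,j)"
      using R_entries ij nm by simp
  qed (use R nm in auto)
  then show ?thesis
    using nm permutes_inv[OF \<sigma>'_perm] unfolding perm_mat_iff_perm_matrix by blast
qed

section \<open>Composition with permutation 1-morphisms\<close>

lemma is_1mor_carrier: "is_1mor n m f \<Longrightarrow> fst f \<in> carrier_mat m n"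
  unfolding is_1mor_def by (auto split: prod.splits)

lemma fst_comp1 [simp]: "fst (comp1 P g f) = fst g * fst f"
  by (simp add: comp1_def split: prod.splits)

lemma admissible_P_unit_row:
  assumes P: "admissible_P P" and i: "i < m"
    and R: "R \<in> carrier_mat m n" and a: "a \<in> carrier_vec n"
  shows "P (unit_vec m i) R a = 1\<^sub>m ((R *\<^sub>v a) $ i)"
proof -
  let ?N = "\<Sum>i'<m. \<Sum>j<n. unit_vec m i $ i' * R $$ (i',j) * a $ j"
  have "?N = (\<Sum>i'<m. (if i' = i then 1 else 0) * (\<Sum>j<n. R $$ (i',j) * a $ j))"
    by (rule sum.cong) (auto simp: unit_vec_def sum_distrib_left mult.assoc)
  also have "\<dots> = (R *\<^sub>v a) $ i"
    using R a i by (simp add: sum_delta_mult scalar_prod_def atLeast0LessThan)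
  finally have N: "?N = (R *\<^sub>v a) $ i" .
  have "unit_vec m i \<in> carrier_vec m"
    by simp
  from P[unfolded admissible_P_def Let_def, rule_format, OF this R a]
  have "P (unit_vec m i) R a = 1\<^sub>m ?N"
    using i by blast
  then show ?thesis
    unfolding N .
qed

lemma is_1mor_perm_matrixD:
  assumes f: "is_1mor n n (perm_matrix p n, s)" and p: "p permutes {..<n}" and i: "i < n"
  shows "a \<in> carrier_vec n \<Longrightarrow> s i a \<in> carrier_mat (a $ p i) (a $ p i)"
    and "a \<in> carrier_vec n \<Longrightarrow> invertible_mat (s i a)"
    and "j < n \<Longrightarrow> s i (unit_vec n j) = 1\<^sub>m (if j = p i then 1 else 0)"
proof -
  have gauge: "\<forall>i<n. \<forall>a\<in>carrier_vec n. s i a \<in> carrier_mat ((perm_matrix p n *\<^sub>v a) $ i)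
      ((perm_matrix p n *\<^sub>v a) $ i) \<and> invertible_mat (s i a)"
    and unit: "\<forall>i<n. \<forall>j<n. s i (unit_vec n j) = 1\<^sub>m (perm_matrix p n $$ (i,j))"
    using f unfolding is_1mor_def prod.case by blast+
  {
    assume a: "a \<in> carrier_vec n"
    have "(perm_matrix p n *\<^sub>v a) $ i = a $ p i"
      using a i by (simp add: perm_matrix_mult_vec[OF p a])
    moreover have "s i a \<in> carrier_mat ((perm_matrix p n *\<^sub>v a) $ i) ((perm_matrix p n *\<^sub>v a) $ i)
        \<and> invertible_mat (s i a)"
      using gauge i a by blast
    ultimately show "s i a \<in> carrier_mat (a $ p i) (a $ p i)" "invertible_mat (s i a)"
      by simp_all
  }
  show "j < n \<Longrightarrow> s i (unit_vec n j) = 1\<^sub>m (if j = p i then 1 else 0)"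
    using unit i by simp
qed

lemma is_1mor_perm_matrixI:
  assumes p: "p permutes {..<n}"
    and carrier: "\<And>i a. i < n \<Longrightarrow> a \<in> carrier_vec n \<Longrightarrow> s i a \<in> carrier_mat (a $ p i) (a $ p i)"
    and invertible: "\<And>i a. i < n \<Longrightarrow> a \<in> carrier_vec n \<Longrightarrow> invertible_mat (s i a)"
    and unit: "\<And>i j. i < n \<Longrightarrow> j < n \<Longrightarrow> s i (unit_vec n j) = 1\<^sub>m (if j = p i then 1 else 0)"
  shows "is_1mor n n (perm_matrix p n, s)"
  unfolding is_1mor_def prod.case
proof (intro conjI allI impI ballI)
  fix i and a :: "nat vec" assume i: "i < n" and a: "a \<in> carrier_vec n"
  have "(perm_matrix p n *\<^sub>v a) $ i = a $ p i"
    using a i by (simp add: perm_matrix_mult_vec[OF p a])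
  then show "s i a \<in> carrier_mat ((perm_matrix p n *\<^sub>v a) $ i) ((perm_matrix p n *\<^sub>v a) $ i)"
    using carrier[OF i a] by simp
  show "invertible_mat (s i a)"
    by (rule invertible[OF i a])
qed (use unit in auto)

text \<open>After a permutation 1-morphism, the normalisation of the gauges and of \<open>P\<close> makes all
  direct-sum and permutation factors of the composite gauge identities.\<close>
lemma comp1_perm_matrix_gauge:
  assumes P: "admissible_P P" and p: "p permutes {..<n}" and q: "q permutes {..<n}"
    and f: "is_1mor n n (perm_matrix p n, s)" and g: "is_1mor n n (perm_matrix q n, t)"
    and k: "k < n" and a: "a \<in> carrier_vec n"
  shows "snd (comp1 P (perm_matrix q n, t) (perm_matrix p n, s)) k a
    = t k (perm_matrix p n *\<^sub>v a) * s (q k) a"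
proof -
  let ?d = "a $ p (q k)"
  have qk: "q k < n" and pqk: "p (q k) < n"
    using permutes_in_image[OF q] permutes_in_image[OF p] k by auto
  have pa: "perm_matrix p n *\<^sub>v a \<in> carrier_vec n" and pa_qk: "(perm_matrix p n *\<^sub>v a) $ q k = ?d"
    using a qk by (simp_all add: perm_matrix_mult_vec[OF p a])
  have s_carrier: "s (q k) a \<in> carrier_mat ?d ?d"
    by (rule is_1mor_perm_matrixD(1)[OF f p qk a])
  have t_carrier: "t k (perm_matrix p n *\<^sub>v a) \<in> carrier_mat ?d ?d"
    using is_1mor_perm_matrixD(1)[OF g q k pa] pa_qk by simp
  have "dsum_list (map (\<lambda>i. kron (1\<^sub>m (perm_matrix q n $$ (k,i))) (s i a)) [0..<n])
      = dsum_list (map (\<lambda>i. kron (1\<^sub>m (if i = q k then 1 else 0)) (s i a)) [0..<n])"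
    using k by (intro arg_cong[where f = dsum_list] map_cong) auto
  also have "\<dots> = s (q k) a"
    by (rule dsum_list_kron_unit[OF qk])
  finally have first_dsum: "dsum_list (map (\<lambda>i. kron (1\<^sub>m (perm_matrix q n $$ (k,i))) (s i a)) [0..<n])
      = s (q k) a" .
  have P_factor: "P (row (perm_matrix q n) k) (perm_matrix p n) a = 1\<^sub>m ?d"
    unfolding perm_matrix_row[of k n q, OF k qk] admissible_P_unit_row[OF P qk perm_matrix_carrier(1) a] pa_qk ..
  have t_unit: "t k (perm_matrix p n *\<^sub>v unit_vec n j) = 1\<^sub>m (if j = p (q k) then 1 else 0)"
    if j: "j < n" for j
  proof -
    have "inv_into UNIV p j < n"
      using permutes_in_image[OF permutes_inv[OF p]] j by simp
    moreover have "(inv_into UNIV p j = q k) = (j = p (q k))"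
      using permutes_inv_eq[OF p] by metis
    ultimately show ?thesis
      using is_1mor_perm_matrixD(3)[OF g q k] by (simp add: perm_matrix_mult_unit_vec[OF p j])
  qed
  have "dsum_list (map (\<lambda>j. kron (minv (t k (perm_matrix p n *\<^sub>v unit_vec n j))) (1\<^sub>m (a $ j))) [0..<n])
      = dsum_list (map (\<lambda>j. kron (1\<^sub>m (if j = p (q k) then 1 else 0)) (1\<^sub>m (a $ j))) [0..<n])"
    using t_unit by (intro arg_cong[where f = dsum_list] map_cong) auto
  also have "\<dots> = 1\<^sub>m ?d"
    by (rule dsum_list_kron_unit[OF pqk])
  finally have last_dsum: "dsum_list (map (\<lambda>j. kron (minv (t k (perm_matrix p n *\<^sub>v unit_vec n j)))
      (1\<^sub>m (a $ j))) [0..<n]) = 1\<^sub>m ?d" .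
  show ?thesis
    unfolding comp1_def using first_dsum P_factor last_dsum s_carrier t_carrier by simp
qed

lemma perm_matrix_inv_mult_vec:
  fixes a :: "'a::semiring_1 vec"
  assumes p: "p permutes {..<n}" and a: "a \<in> carrier_vec n"
  shows "perm_matrix (inv_into UNIV p) n *\<^sub>v (perm_matrix p n *\<^sub>v a) = a"
  using a perm_matrix_inverse(2)[OF p, where 'a = 'a]
  by (simp flip: assoc_mult_mat_vec[OF perm_matrix_carrier(1) perm_matrix_carrier(1) a])

text \<open>The gauge of the inverse of \<open>(perm_matrix p n, s)\<close>, chosen so that the composite gauge
  in \<open>comp1_perm_matrix_gauge\<close> becomes the identity.\<close>
definition perm_inv_gauge :: "(nat \<Rightarrow> nat) \<Rightarrow> nat \<Rightarrow> (nat \<Rightarrow> nat vec \<Rightarrow> complex mat)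
    \<Rightarrow> nat \<Rightarrow> nat vec \<Rightarrow> complex mat" where
  "perm_inv_gauge p n s k b = minv (s (inv_into UNIV p k) (perm_matrix (inv_into UNIV p) n *\<^sub>v b))"

lemma is_1mor_perm_inv:
  assumes p: "p permutes {..<n}" and f: "is_1mor n n (perm_matrix p n, s)"
  shows "is_1mor n n (perm_matrix (inv_into UNIV p) n, perm_inv_gauge p n s)"
proof -
  let ?q = "inv_into UNIV p"
  have q: "?q permutes {..<n}"
    by (rule permutes_inv[OF p])
  have s_inv: "s (?q k) (perm_matrix ?q n *\<^sub>v b) \<in> carrier_mat (b $ ?q k) (b $ ?q k)
      \<and> invertible_mat (s (?q k) (perm_matrix ?q n *\<^sub>v b))"
    if k: "k < n" and b: "b \<in> carrier_vec n" for k b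
  proof -
    have qk: "?q k < n"
      using permutes_in_image[OF q] k by simp
    have "perm_matrix ?q n *\<^sub>v b \<in> carrier_vec n" "(perm_matrix ?q n *\<^sub>v b) $ p (?q k) = b $ ?q k"
      using b k by (simp_all add: perm_matrix_mult_vec[OF q b] permutes_inverses[OF p])
    then show ?thesis
      using is_1mor_perm_matrixD(1,2)[OF f p qk] by metis
  qed
  show ?thesis
  proof (rule is_1mor_perm_matrixI[OF q])
    fix k j assume k: "k < n" and j: "j < n"
    have "p j < n" "?q k < n"
      using permutes_in_image[OF p] permutes_in_image[OF q] j k by auto
    moreover have "(p j = p (?q k)) = (j = ?q k)"
      using permutes_inverses[OF p] by metis
    ultimately show "perm_inv_gauge p n s k (unit_vec n j) = 1\<^sub>m (if j = ?q k then 1 else 0)"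
      using is_1mor_perm_matrixD(3)[OF f p] unfolding perm_inv_gauge_def
      by (simp add: perm_matrix_mult_unit_vec[OF q j] permutes_inv_inv[OF p])
  next
    fix k and b :: "nat vec" assume "k < n" "b \<in> carrier_vec n"
    then show "perm_inv_gauge p n s k b \<in> carrier_mat (b $ ?q k) (b $ ?q k)"
      "invertible_mat (perm_inv_gauge p n s k b)"
      using s_inv minv_inverse(1) invertible_minv unfolding perm_inv_gauge_def by blast+
  qed
qed

lemma perm_matrix_imp_invertible_1mor:
  assumes P: "admissible_P P" and p: "p permutes {..<n}" and f: "is_1mor n n (perm_matrix p n, s)"
  shows "invertible_1mor P n n (perm_matrix p n, s)"
proof -
  let ?q = "inv_into UNIV p" and ?t = "perm_inv_gauge p n s"
  have q: "?q permutes {..<n}"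
    by (rule permutes_inv[OF p])
  have g: "is_1mor n n (perm_matrix ?q n, ?t)"
    by (rule is_1mor_perm_inv[OF p f])
  have left: "snd (comp1 P (perm_matrix ?q n, ?t) (perm_matrix p n, s)) k a = 1\<^sub>m (a $ k)"
    if k: "k < n" and a: "a \<in> carrier_vec n" for k a
  proof -
    have qk: "?q k < n"
      using permutes_in_image[OF q] k by simp
    have "?t k (perm_matrix p n *\<^sub>v a) = minv (s (?q k) a)"
      unfolding perm_inv_gauge_def perm_matrix_inv_mult_vec[OF p a] ..
    moreover have "s (?q k) a \<in> carrier_mat (a $ k) (a $ k)" "invertible_mat (s (?q k) a)"
      using is_1mor_perm_matrixD(1,2)[OF f p qk a] by (simp_all add: permutes_inverses[OF p])
    ultimately show ?thesis
      using comp1_perm_matrix_gauge[OF P p q f g k a] minv_inverse(3) by simp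
  qed
  have right: "snd (comp1 P (perm_matrix p n, s) (perm_matrix ?q n, ?t)) k b = 1\<^sub>m (b $ k)"
    if k: "k < n" and b: "b \<in> carrier_vec n" for k b
  proof -
    let ?c = "perm_matrix ?q n *\<^sub>v b"
    have c: "?c \<in> carrier_vec n" and c_pk: "?c $ p k = b $ k"
      using permutes_in_image[OF p] k b by (auto simp: perm_matrix_mult_vec[OF q b] permutes_inverses[OF p])
    have "?t (p k) b = minv (s k ?c)"
      unfolding perm_inv_gauge_def by (simp add: permutes_inverses[OF p])
    moreover have "s k ?c \<in> carrier_mat (b $ k) (b $ k)" "invertible_mat (s k ?c)"
      using is_1mor_perm_matrixD(1,2)[OF f p k c] c_pk by simp_all
    ultimately show ?thesis
      using comp1_perm_matrix_gauge[OF P q p g f k b] minv_inverse(2) by simp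
  qed
  have "mor_eq n n (comp1 P (perm_matrix ?q n, ?t) (perm_matrix p n, s)) (id1 n)"
    "mor_eq n n (comp1 P (perm_matrix p n, s) (perm_matrix ?q n, ?t)) (id1 n)"
    unfolding mor_eq_def id1_def using left right perm_matrix_inverse[OF p] by simp_all
  then show ?thesis
    unfolding invertible_1mor_def using g by blast
qed

section \<open>2-morphisms and equivalences\<close>

lemma iso2_iff:
  "iso2 n m f f' \<longleftrightarrow> (\<forall>i<m. \<forall>j<n. fst f $$ (i,j) = fst f' $$ (i,j))"
proof
  assume "iso2 n m f f'"
  then obtain T T' where T: "is_2mor n m f f' T" "is_2mor n m f' f T'"
    "\<forall>i<m. \<forall>j<n. vcomp T' T i j = id2 f i j \<and> vcomp T T' i j = id2 f' i j"
    unfolding iso2_def invertible_2mor_def by blast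
  show "\<forall>i<m. \<forall>j<n. fst f $$ (i,j) = fst f' $$ (i,j)"
  proof (intro allI impI)
    fix i j assume "i < m" "j < n"
    then show "fst f $$ (i,j) = fst f' $$ (i,j)"
      using T by (intro mutually_inverse_mats_square[of "T' i j" _ _ "T i j"])
        (auto simp: is_2mor_def vcomp_def id2_def)
  qed
next
  assume "\<forall>i<m. \<forall>j<n. fst f $$ (i,j) = fst f' $$ (i,j)"
  then have "invertible_2mor n m f f' (id2 f)"
    unfolding invertible_2mor_def is_2mor_def by (intro conjI exI[of _ "id2 f"]) (auto simp: id2_def vcomp_def)
  then show "iso2 n m f f'"
    unfolding iso2_def by blast
qed

lemma iso2_iff_rank_eq:
  "fst f \<in> carrier_mat m n \<Longrightarrow> fst f' \<in> carrier_mat m n \<Longrightarrow> iso2 n m f f' \<longleftrightarrow> fst f = fst f'"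
  unfolding iso2_iff by (auto intro!: eq_matI)

lemma invertible_2mor_iff:
  assumes T: "is_2mor n m f f' T" and rank: "fst f' = fst f"
  shows "invertible_2mor n m f f' T \<longleftrightarrow> (\<forall>i<m. \<forall>j<n. fst f $$ (i,j) \<noteq> 0 \<longrightarrow> invertible_mat (T i j))"
proof
  assume "invertible_2mor n m f f' T"
  then obtain T' where T': "is_2mor n m f' f T'"
    "\<forall>i<m. \<forall>j<n. vcomp T' T i j = id2 f i j \<and> vcomp T T' i j = id2 f' i j"
    unfolding invertible_2mor_def by blast
  show "\<forall>i<m. \<forall>j<n. fst f $$ (i,j) \<noteq> 0 \<longrightarrow> invertible_mat (T i j)"
  proof (intro allI impI)
    fix i j assume "i < m" "j < n"
    then have "T i j \<in> carrier_mat (fst f $$ (i,j)) (fst f $$ (i,j))"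
      "T' i j \<in> carrier_mat (fst f $$ (i,j)) (fst f $$ (i,j))"
      "T i j * T' i j = 1\<^sub>m (fst f $$ (i,j))" "T' i j * T i j = 1\<^sub>m (fst f $$ (i,j))"
      using T T' rank by (simp_all add: is_2mor_def vcomp_def id2_def)
    then show "invertible_mat (T i j)"
      by (rule invertible_matI)
  qed
next
  assume H: "\<forall>i<m. \<forall>j<n. fst f $$ (i,j) \<noteq> 0 \<longrightarrow> invertible_mat (T i j)"
  have T_carrier: "T i j \<in> carrier_mat (fst f $$ (i,j)) (fst f $$ (i,j))" if "i < m" "j < n" for i j
    using T rank that unfolding is_2mor_def by simp
  have T_invertible: "invertible_mat (T i j)" if "i < m" "j < n" for i j
  proof (cases "fst f $$ (i,j) = 0")
    case True
    then show ?thesis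
      using T_carrier[OF that] by (simp add: invertible_mat_carrier_0)
  qed (use H that in blast)
  show "invertible_2mor n m f f' T"
    unfolding invertible_2mor_def
  proof (intro conjI exI[of _ "\<lambda>i j. minv (T i j)"])
    show "is_2mor n m f' f (\<lambda>i j. minv (T i j))"
      unfolding is_2mor_def using rank T_carrier T_invertible minv_inverse(1) by simp
    show "\<forall>i<m. \<forall>j<n. vcomp (\<lambda>i j. minv (T i j)) T i j = id2 f i j \<and> vcomp T (\<lambda>i j. minv (T i j)) i j = id2 f' i j"
      unfolding vcomp_def id2_def using rank T_carrier T_invertible minv_inverse(2,3) by simp
  qed (rule T)
qed

lemma invertible_1mor_imp_equivalence_1mor:
  assumes "invertible_1mor P n m f"
  shows "equivalence_1mor P n m f"
proof -
  obtain g where g: "is_1mor m n g" "mor_eq n n (comp1 P g f) (id1 n)" "mor_eq m m (comp1 P f g) (id1 m)"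
    using assms unfolding invertible_1mor_def by blast
  then have "iso2 n n (comp1 P g f) (id1 n)" "iso2 m m (comp1 P f g) (id1 m)"
    unfolding mor_eq_def iso2_iff by simp_all
  then show ?thesis
    unfolding equivalence_1mor_def using g(1) by blast
qed

lemma equivalence_1mor_imp_perm_mat:
  assumes f: "is_1mor n m f" and "equivalence_1mor P n m f"
  shows "n = m \<and> perm_mat n (fst f)"
proof -
  obtain g where g: "is_1mor m n g" "iso2 n n (comp1 P g f) (id1 n)" "iso2 m m (comp1 P f g) (id1 m)"
    using assms(2) unfolding equivalence_1mor_def by blast
  have "fst f \<in> carrier_mat m n" "fst g \<in> carrier_mat n m"
    using is_1mor_carrier f g(1) by blast+
  moreover from this have "fst g * fst f = 1\<^sub>m n" "fst f * fst g = 1\<^sub>m m"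
    using g(2,3) iso2_iff_rank_eq by (auto simp: id1_def)
  ultimately show ?thesis
    by (rule nat_mat_inverse_perm_mat)
qed

theorem mainTheorem5:
  fixes P :: "nat vec \<Rightarrow> nat mat \<Rightarrow> nat vec \<Rightarrow> complex mat"
    and n m :: nat and R R' :: "nat mat" and s s' :: "nat \<Rightarrow> nat vec \<Rightarrow> complex mat"
  assumes "admissible_P P" and "n \<ge> 1" and "m \<ge> 1"
    and "is_1mor n m (R, s)" and "is_1mor n m (R', s')"
  shows "(invertible_1mor P n m (R, s) \<longleftrightarrow> n = m \<and> perm_mat n R)
    \<and> (iso2 n m (R, s) (R', s') \<longleftrightarrow> R = R')
    \<and> (\<forall>s''. is_1mor n m (R, s'') \<longrightarrow> (\<forall>T. is_2mor n m (R, s) (R, s'') T \<longrightarrow>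
          (invertible_2mor n m (R, s) (R, s'') T \<longleftrightarrow>
           (\<forall>i<m. \<forall>j<n. R $$ (i,j) \<noteq> 0 \<longrightarrow> invertible_mat (T i j)))))
    \<and> (equivalence_1mor P n m (R, s) \<longleftrightarrow> invertible_1mor P n m (R, s))"
proof -
  \<comment> \<open>\<open>n \<ge> 1\<close> and \<open>m \<ge> 1\<close> are unused: none of the lemmas needs nonempty index sets.\<close>
  have invertible_iff: "invertible_1mor P n m (R, s) \<longleftrightarrow> n = m \<and> perm_mat n R"
  proof
    assume "invertible_1mor P n m (R, s)"
    then show "n = m \<and> perm_mat n R"
      using equivalence_1mor_imp_perm_mat[OF assms(4)] invertible_1mor_imp_equivalence_1mor by fastforce
  next
    assume "n = m \<and> perm_mat n R"
    then show "invertible_1mor P n m (R, s)"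
      using perm_matrix_imp_invertible_1mor[OF assms(1)] assms(4)
      unfolding perm_mat_iff_perm_matrix by blast
  qed
  moreover have "equivalence_1mor P n m (R, s) \<longleftrightarrow> invertible_1mor P n m (R, s)"
    using invertible_iff equivalence_1mor_imp_perm_mat[OF assms(4)]
      invertible_1mor_imp_equivalence_1mor by fastforce
  moreover have "iso2 n m (R, s) (R', s') \<longleftrightarrow> R = R'"
    using is_1mor_carrier[OF assms(4)] is_1mor_carrier[OF assms(5)] by (simp add: iso2_iff_rank_eq)
  moreover have "invertible_2mor n m (R, s) (R, s'') T
      \<longleftrightarrow> (\<forall>i<m. \<forall>j<n. R $$ (i,j) \<noteq> 0 \<longrightarrow> invertible_mat (T i j))"
    if "is_2mor n m (R, s) (R, s'') T" for s'' T
    using invertible_2mor_iff[OF that] by simp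
  ultimately show ?thesis
    by blast
qed

end
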